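(* Let $k\in\hat I$ and let $\nu,\mu$ be partitions such that $\mu$ is obtained from $\nu$ by adding one box $(x,y)$ of color $i$, i.e. with $k+x-y\equiv i\pmod n$. Then $v^{(k)}(\mu)-v^{(k)}(\nu)=-\overline{\alpha}_i$, where $(\overline\alpha_i)_j=2\delta^{(n)}_{i,j}-\delta^{(n)}_{i,j+1}-\delta^{(n)}_{i,j-1}$ for $j\in\hat I$.
   Context: Fix $n\ge3$ and $\hat I=\{0,\dots,n-1\}$ (residues mod $n$). Let $\delta^{(n)}_{i,j}=1$ if $i\equiv j\pmod n$ and $0$ otherwise. For a partition $\gamma$ with conjugate $\gamma'_y=|\{x:\gamma_x\ge y\}|$: - $(x,y)\in\mathbb Z_{\ge1}^2$ is a convex corner if $\gamma'_{y+1}<\gamma'_y=x$; - $(x,y)$ is a concave corner if $\gamma'_y=x-1$ and either $y=1$ or $\gamma'_{y-1}>x-1$. For $k,i\in\hat I$, $CC_i^{(k)}(\gamma)$ (resp. $CV_i^{(k)}(\gamma)$) is the set of concave (resp. convex) corners with $k+x-y\equiv i$. Set $v^{(k)}(\gamma)_i=|CC_i^{(k)}(\gamma)|-|CV_i^{(k)}(\gamma)|$, so $v^{(k)}(\gamma)\in\mathbb Z^n$. Boxes of $\gamma$ are the pairs $(x,y)$ with $\gamma_x\ge y$. *)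

theory Defs
  imports Main
begin

text \<open>A partition is represented as a function gamma :: nat => nat, where gamma x is the
  length of row x (x >= 1). Convention: gamma 0 = 0, rows weakly decreasing, finitely many
  nonzero rows.\<close>

definition is_partition :: "(nat \<Rightarrow> nat) \<Rightarrow> bool" where
  "is_partition g \<longleftrightarrow> g 0 = 0 \<and> (\<forall>x\<ge>1. g (Suc x) \<le> g x) \<and> finite {x. g x > 0}"

definition conj_part :: "(nat \<Rightarrow> nat) \<Rightarrow> nat \<Rightarrow> nat" where
  "conj_part g y = card {x. x \<ge> 1 \<and> g x \<ge> y}"

definition boxes :: "(nat \<Rightarrow> nat) \<Rightarrow> (nat \<times> nat) set" where
  "boxes g = {(x, y). x \<ge> 1 \<and> y \<ge> 1 \<and> g x \<ge> y}"

definition convex_corners :: "(nat \<Rightarrow> nat) \<Rightarrow> (nat \<times> nat) set" where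
  "convex_corners g = {(x, y). x \<ge> 1 \<and> y \<ge> 1 \<and>
      conj_part g (y + 1) < conj_part g y \<and> conj_part g y = x}"

definition concave_corners :: "(nat \<Rightarrow> nat) \<Rightarrow> (nat \<times> nat) set" where
  "concave_corners g = {(x, y). x \<ge> 1 \<and> y \<ge> 1 \<and>
      conj_part g y = x - 1 \<and> (y = 1 \<or> conj_part g (y - 1) > x - 1)}"

definition colour :: "nat \<Rightarrow> int \<Rightarrow> nat \<times> nat \<Rightarrow> int" where
  "colour n k p = (k + int (fst p) - int (snd p)) mod int n"

definition CC :: "nat \<Rightarrow> int \<Rightarrow> int \<Rightarrow> (nat \<Rightarrow> nat) \<Rightarrow> (nat \<times> nat) set" where
  "CC n k i g = {p \<in> concave_corners g. colour n k p = i mod int n}"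

definition CV :: "nat \<Rightarrow> int \<Rightarrow> int \<Rightarrow> (nat \<Rightarrow> nat) \<Rightarrow> (nat \<times> nat) set" where
  "CV n k i g = {p \<in> convex_corners g. colour n k p = i mod int n}"

definition vvec :: "nat \<Rightarrow> int \<Rightarrow> (nat \<Rightarrow> nat) \<Rightarrow> int \<Rightarrow> int" where
  "vvec n k g i = int (card (CC n k i g)) - int (card (CV n k i g))"

definition delta_n :: "nat \<Rightarrow> int \<Rightarrow> int \<Rightarrow> int" where
  "delta_n n i j = (if i mod int n = j mod int n then 1 else 0)"

definition alpha_bar :: "nat \<Rightarrow> int \<Rightarrow> int \<Rightarrow> int" where
  "alpha_bar n i j = 2 * delta_n n i j - delta_n n i (j + 1) - delta_n n i (j - 1)"

end

theory Submission imports Defs begin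

text \<open>Convex and concave corners sit at the ends of the rows: row a of a partition g has a
  convex corner at (a, g a) exactly when it is longer than row a+1, and a concave corner at
  (a, g a + 1) exactly when it is shorter than row a-1 (or a = 1). Adding the box (x,y)
  lengthens row x from y-1 to y, so only the corners attached to rows x-1, x, x+1 change.
  Pairing the row-x concave corner with the row-(x-1) convex corner, and the row-(x+1)
  concave corner with the row-x convex corner, each pair loses one corner of colour i and
  gains one of colour i-1, resp. i+1, whatever the neighbouring rows look like.\<close>

lemma partition_antimono:
  assumes P: "is_partition g" and "1 \<le> a" and "a \<le> b"
  shows "g b \<le> g a"
  using \<open>a \<le> b\<close>
proof (induction b rule: dec_induct)
  case (step m)
  have "g (Suc m) \<le> g m" using P step(1) \<open>1 \<le> a\<close> unfolding is_partition_def by auto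
  then show ?case using step(3) by simp
qed simp

lemma partition_eventually_zero:
  assumes "is_partition g" shows "\<exists>N. g (Suc N) = 0"
proof -
  have "finite {x. g x > 0}" using assms unfolding is_partition_def by blast
  then obtain N where "\<forall>x\<in>{x. g x > 0}. x < N" using finite_nat_set_iff_bounded by blast
  then show ?thesis by (intro exI[of _ N]) auto
qed

lemma le_conj_part_iff:
  assumes P: "is_partition g" and y: "1 \<le> y" and a: "1 \<le> a"
  shows "a \<le> conj_part g y \<longleftrightarrow> y \<le> g a"
proof -
  define m where "m = (LEAST m. g (Suc m) < y)"
  obtain N where "g (Suc N) = 0" using partition_eventually_zero[OF P] by blast
  then have ex: "\<exists>m. g (Suc m) < y" using y by (intro exI[of _ N]) simp
  have m_short: "g (Suc m) < y" unfolding m_def by (rule LeastI_ex[OF ex])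
  have m_long: "m = 0 \<or> y \<le> g m"
  proof (cases m)
    case (Suc p)
    then have "p < (LEAST m. g (Suc m) < y)" using m_def by simp
    then have "\<not> g (Suc p) < y" by (rule not_less_Least)
    then show ?thesis using Suc by simp
  qed simp
  have rows: "{x. x \<ge> 1 \<and> g x \<ge> y} = {1..m}"
  proof (intro set_eqI iffI)
    fix z assume z: "z \<in> {x. x \<ge> 1 \<and> g x \<ge> y}"
    show "z \<in> {1..m}"
    proof (rule ccontr)
      assume "z \<notin> {1..m}"
      then have "g z \<le> g (Suc m)" using z partition_antimono[OF P, of "Suc m" z] by auto
      then show False using z m_short by simp
    qed
  next
    fix z assume "z \<in> {1..m}"
    then show "z \<in> {x. x \<ge> 1 \<and> g x \<ge> y}" using partition_antimono[OF P, of z m] m_long by auto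
  qed
  then have "conj_part g y = m" unfolding conj_part_def by simp
  moreover have "a \<in> {x. x \<ge> 1 \<and> g x \<ge> y} \<longleftrightarrow> a \<in> {1..m}" by (simp only: rows)
  ultimately show ?thesis using a by auto
qed

lemma convex_corners_eq:
  assumes P: "is_partition g"
  shows "convex_corners g = {(a, b). 1 \<le> a \<and> 1 \<le> b \<and> g a = b \<and> g (Suc a) < b}"
proof (intro set_eqI)
  fix p :: "nat \<times> nat"
  obtain a b where p: "p = (a, b)" by (cases p)
  show "p \<in> convex_corners g \<longleftrightarrow> p \<in> {(a, b). 1 \<le> a \<and> 1 \<le> b \<and> g a = b \<and> g (Suc a) < b}"
  proof (cases "1 \<le> a \<and> 1 \<le> b")
    case True
    have "p \<in> convex_corners g \<longleftrightarrow>
        \<not> a \<le> conj_part g (b + 1) \<and> a \<le> conj_part g b \<and> \<not> Suc a \<le> conj_part g b"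
      using True by (auto simp: p convex_corners_def)
    also have "\<dots> \<longleftrightarrow> \<not> b + 1 \<le> g a \<and> b \<le> g a \<and> \<not> b \<le> g (Suc a)"
      using True le_conj_part_iff[OF P, of b a] le_conj_part_iff[OF P, of b "Suc a"]
        le_conj_part_iff[OF P, of "b + 1" a] by simp
    finally show ?thesis using True by (auto simp: p)
  qed (auto simp: p convex_corners_def)
qed

lemma concave_corners_eq:
  assumes P: "is_partition g"
  shows "concave_corners g =
    {(a, b). 1 \<le> a \<and> 1 \<le> b \<and> g a = b - 1 \<and> (a = 1 \<or> b \<le> g (a - 1))}"
proof (intro set_eqI)
  fix p :: "nat \<times> nat"
  obtain a b where p: "p = (a, b)" by (cases p)
  show "p \<in> concave_corners g \<longleftrightarrow>
      p \<in> {(a, b). 1 \<le> a \<and> 1 \<le> b \<and> g a = b - 1 \<and> (a = 1 \<or> b \<le> g (a - 1))}"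
  proof (cases "1 \<le> a \<and> 1 \<le> b")
    case True
    have prev_row: "a = 1 \<or> a - 1 \<le> conj_part g b \<longleftrightarrow> a = 1 \<or> b \<le> g (a - 1)"
      using le_conj_part_iff[OF P, of b "a - 1"] True by (cases "a = 1") auto
    have prev_col: "b = 1 \<or> a \<le> conj_part g (b - 1) \<longleftrightarrow> b = 1 \<or> b - 1 \<le> g a"
      using le_conj_part_iff[OF P, of "b - 1" a] True by (cases "b = 1") auto
    have "p \<in> concave_corners g \<longleftrightarrow>
        (a = 1 \<or> a - 1 \<le> conj_part g b) \<and> \<not> a \<le> conj_part g b \<and>
        (b = 1 \<or> a \<le> conj_part g (b - 1))"
      using True by (auto simp: p concave_corners_def)
    also have "\<dots> \<longleftrightarrow> (a = 1 \<or> b \<le> g (a - 1)) \<and> \<not> b \<le> g a \<and> (b = 1 \<or> b - 1 \<le> g a)"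
      using prev_row prev_col le_conj_part_iff[OF P, of b a] True by simp
    finally show ?thesis using True by (auto simp: p)
  qed (auto simp: p concave_corners_def)
qed

definition convex_rows :: "nat \<Rightarrow> int \<Rightarrow> int \<Rightarrow> (nat \<Rightarrow> nat) \<Rightarrow> nat set" where
  "convex_rows n k j g =
    {a. 1 \<le> a \<and> 1 \<le> g a \<and> g (Suc a) < g a \<and> colour n k (a, g a) = j mod int n}"

definition concave_rows :: "nat \<Rightarrow> int \<Rightarrow> int \<Rightarrow> (nat \<Rightarrow> nat) \<Rightarrow> nat set" where
  "concave_rows n k j g =
    {a. 1 \<le> a \<and> (a = 1 \<or> g a < g (a - 1)) \<and> colour n k (a, Suc (g a)) = j mod int n}"

lemma card_CV_eq_card_convex_rows:
  assumes "is_partition g"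
  shows "card (CV n k j g) = card (convex_rows n k j g)"
proof -
  have "CV n k j g = (\<lambda>a. (a, g a)) ` convex_rows n k j g"
    by (auto simp: CV_def convex_rows_def convex_corners_eq[OF assms] image_iff)
  then show ?thesis by (simp add: card_image inj_on_def)
qed

lemma card_CC_eq_card_concave_rows:
  assumes "is_partition g"
  shows "card (CC n k j g) = card (concave_rows n k j g)"
proof -
  have "CC n k j g = (\<lambda>a. (a, Suc (g a))) ` concave_rows n k j g"
    by (auto simp: CC_def concave_rows_def concave_corners_eq[OF assms] image_iff)
  then show ?thesis by (simp add: card_image inj_on_def)
qed

lemma vvec_eq_card_rows:
  assumes "is_partition g"
  shows "vvec n k g j = int (card (concave_rows n k j g)) - int (card (convex_rows n k j g))"
  using assms by (simp add: vvec_def card_CC_eq_card_concave_rows card_CV_eq_card_convex_rows)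

lemma finite_convex_rows:
  assumes "is_partition g" shows "finite (convex_rows n k j g)"
proof (rule finite_subset)
  show "convex_rows n k j g \<subseteq> {x. g x > 0}" by (auto simp: convex_rows_def)
  show "finite {x. g x > 0}" using assms unfolding is_partition_def by blast
qed

lemma finite_concave_rows:
  assumes "is_partition g" shows "finite (concave_rows n k j g)"
proof (rule finite_subset)
  show "concave_rows n k j g \<subseteq> insert 1 (Suc ` {x. g x > 0})"
  proof
    fix a assume "a \<in> concave_rows n k j g"
    then have "a = 1 \<or> a = Suc (a - 1) \<and> g (a - 1) > 0" by (auto simp: concave_rows_def)
    then show "a \<in> insert 1 (Suc ` {x. g x > 0})" by blast
  qed
  show "finite (insert 1 (Suc ` {x. g x > 0}))" using assms unfolding is_partition_def by blast
qed

lemma colour_eq_iff_dvd: "colour n k (a, b) = j mod int n \<longleftrightarrow> int n dvd (k + int a - int b - j)"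
  by (simp add: colour_def mod_eq_dvd_iff)

lemma delta_n_eq_of_bool_dvd: "delta_n n i j = of_bool (int n dvd (i - j))"
  by (simp add: delta_n_def mod_eq_dvd_iff)

lemma card_diff_eq_sum_on:
  assumes "finite A" "finite B" "finite F" "A - F = B - F"
  shows "int (card A) - int (card B) = (\<Sum>a\<in>F. of_bool (a \<in> A) - of_bool (a \<in> B))"
proof -
  have "card A = card (A \<inter> F) + card (A - F)" "card B = card (B \<inter> F) + card (B - F)"
    using assms(1,2) by (simp_all add: card_Int_Diff)
  moreover have "F \<inter> {a. a \<in> A} = A \<inter> F" "F \<inter> {a. a \<in> B} = B \<inter> F" by auto
  ultimately show ?thesis using assms(3,4) by (simp add: sum_subtractf)
qed

lemma added_box_row_update:
  assumes Pn: "is_partition nu" and Pm: "is_partition mu"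
    and new: "(x, y) \<notin> boxes nu" and B: "boxes mu = insert (x, y) (boxes nu)"
  shows "1 \<le> x" "1 \<le> y" "nu x = y - 1" "mu = nu(x := y)"
proof -
  have in_mu: "b \<le> mu a \<longleftrightarrow> b \<le> nu a \<or> (a, b) = (x, y)" if "1 \<le> a" "1 \<le> b" for a b
    using that arg_cong[OF B, of "\<lambda>S. (a, b) \<in> S"] by (auto simp: boxes_def)
  show x: "1 \<le> x" and y: "1 \<le> y" using B by (auto simp: boxes_def)
  have "nu x < y" using new x y by (auto simp: boxes_def)
  moreover have "mu x = y" using in_mu[of x "mu x"] in_mu[of x y] x y \<open>nu x < y\<close> by force
  ultimately show "nu x = y - 1" using in_mu[of x "y - 1"] x y by fastforce
  have "mu a = nu a" if "a \<noteq> x" for a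
  proof (cases "a = 0")
    case False
    have "mu a \<le> nu a" using False that in_mu[of a "mu a"] by (cases "mu a = 0") auto
    moreover have "nu a \<le> mu a" using False in_mu[of a "nu a"] by (cases "nu a = 0") auto
    ultimately show ?thesis by simp
  qed (use Pn Pm in \<open>simp add: is_partition_def\<close>)
  with \<open>mu x = y\<close> show "mu = nu(x := y)" by auto
qed

locale box_addition =
  fixes nu :: "nat \<Rightarrow> nat" and x y :: nat
  assumes partition_nu: "is_partition nu" and partition_mu: "is_partition (nu(x := y))"
    and row_pos: "1 \<le> x" and col_pos: "1 \<le> y" and row_grows: "nu x = y - 1"
begin

abbreviation mu :: "nat \<Rightarrow> nat" where "mu \<equiv> nu(x := y)"

lemma next_row_short: "nu (Suc x) \<le> y - 1"
  using partition_antimono[OF partition_nu, of x "Suc x"] row_pos row_grows by simp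

lemma prev_row_long:
  assumes "2 \<le> x" shows "y \<le> nu (x - 1)"
proof -
  have "mu x \<le> mu (x - 1)" using partition_antimono[OF partition_mu, of "x - 1" x] assms by simp
  then show ?thesis using assms by (simp split: if_splits)
qed

lemma concave_rows_change:
  "int (card (concave_rows n k j mu)) - int (card (concave_rows n k j nu)) =
     (of_bool (x \<in> concave_rows n k j mu) - of_bool (x \<in> concave_rows n k j nu)) +
     (of_bool (Suc x \<in> concave_rows n k j mu) - of_bool (Suc x \<in> concave_rows n k j nu))"
proof -
  have "concave_rows n k j mu - {x, Suc x} = concave_rows n k j nu - {x, Suc x}"
    unfolding concave_rows_def by auto
  from card_diff_eq_sum_on[OF finite_concave_rows[OF partition_mu]
      finite_concave_rows[OF partition_nu] _ this]
  show ?thesis by simp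
qed

lemma convex_rows_change:
  "int (card (convex_rows n k j mu)) - int (card (convex_rows n k j nu)) =
     (of_bool (x - 1 \<in> convex_rows n k j mu) - of_bool (x - 1 \<in> convex_rows n k j nu)) +
     (of_bool (x \<in> convex_rows n k j mu) - of_bool (x \<in> convex_rows n k j nu))"
proof -
  have "convex_rows n k j mu - {x - 1, x} = convex_rows n k j nu - {x - 1, x}"
    unfolding convex_rows_def by auto
  from card_diff_eq_sum_on[OF finite_convex_rows[OF partition_mu]
      finite_convex_rows[OF partition_nu] _ this]
  show ?thesis using row_pos col_pos by simp
qed

lemma left_corners_change:
  fixes n :: nat and k j :: int
  defines "e \<equiv> k + int x - int y"
  shows "(of_bool (x \<in> concave_rows n k j mu) - of_bool (x \<in> concave_rows n k j nu))
       - (of_bool (x - 1 \<in> convex_rows n k j mu) - of_bool (x - 1 \<in> convex_rows n k j nu))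
       = (of_bool (int n dvd (e - 1 - j)) - of_bool (int n dvd (e - j)) :: int)"
proof -
  define D where "D = (int n dvd (k + int (x - 1) - int (nu (x - 1)) - j))"
  have "x \<in> concave_rows n k j mu \<longleftrightarrow> (x = 1 \<or> y < nu (x - 1)) \<and> int n dvd (e - 1 - j)"
    unfolding concave_rows_def colour_eq_iff_dvd e_def using row_pos col_pos
    by (auto simp: algebra_simps)
  moreover have "x \<in> concave_rows n k j nu \<longleftrightarrow> int n dvd (e - j)"
    unfolding concave_rows_def colour_eq_iff_dvd e_def using row_pos col_pos row_grows prev_row_long
    by (cases "x \<ge> 2") (auto simp: algebra_simps)
  moreover have "x - 1 \<in> convex_rows n k j mu \<longleftrightarrow> x \<ge> 2 \<and> y < nu (x - 1) \<and> D"
    unfolding convex_rows_def colour_eq_iff_dvd D_def using row_pos col_pos prev_row_long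
    by (cases "x \<ge> 2") auto
  moreover have "x - 1 \<in> convex_rows n k j nu \<longleftrightarrow> x \<ge> 2 \<and> D"
    unfolding convex_rows_def colour_eq_iff_dvd D_def using row_pos col_pos row_grows prev_row_long
    by (cases "x \<ge> 2") auto
  moreover have "x \<ge> 2 \<Longrightarrow> \<not> y < nu (x - 1) \<Longrightarrow> D \<longleftrightarrow> int n dvd (e - 1 - j)"
    unfolding D_def e_def using prev_row_long by (auto simp: algebra_simps)
  ultimately show ?thesis using row_pos col_pos by (cases "x \<ge> 2"; cases "y < nu (x - 1)") auto
qed

lemma right_corners_change:
  fixes n :: nat and k j :: int
  defines "e \<equiv> k + int x - int y"
  shows "(of_bool (Suc x \<in> concave_rows n k j mu) - of_bool (Suc x \<in> concave_rows n k j nu))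
       - (of_bool (x \<in> convex_rows n k j mu) - of_bool (x \<in> convex_rows n k j nu))
       = (of_bool (int n dvd (e + 1 - j)) - of_bool (int n dvd (e - j)) :: int)"
proof -
  define D where "D = (int n dvd (k + int (Suc x) - int (Suc (nu (Suc x))) - j))"
  have "Suc x \<in> concave_rows n k j mu \<longleftrightarrow> D"
    unfolding concave_rows_def colour_eq_iff_dvd D_def using row_pos col_pos next_row_short
    by auto
  moreover have "Suc x \<in> concave_rows n k j nu \<longleftrightarrow> nu (Suc x) < y - 1 \<and> D"
    unfolding concave_rows_def colour_eq_iff_dvd D_def using row_pos col_pos row_grows by auto
  moreover have "x \<in> convex_rows n k j mu \<longleftrightarrow> int n dvd (e - j)"
    unfolding convex_rows_def colour_eq_iff_dvd e_def using row_pos col_pos next_row_short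
    by (auto simp: algebra_simps)
  moreover have "x \<in> convex_rows n k j nu \<longleftrightarrow> nu (Suc x) < y - 1 \<and> int n dvd (e + 1 - j)"
    unfolding convex_rows_def colour_eq_iff_dvd e_def using row_pos col_pos row_grows
    by (auto simp: algebra_simps)
  moreover have "\<not> nu (Suc x) < y - 1 \<Longrightarrow> D \<longleftrightarrow> int n dvd (e + 1 - j)"
    unfolding D_def e_def using next_row_short col_pos by (auto simp: algebra_simps)
  ultimately show ?thesis by (cases "nu (Suc x) < y - 1") auto
qed

lemma vvec_change:
  fixes n :: nat and k j :: int
  defines "e \<equiv> k + int x - int y"
  shows "vvec n k mu j - vvec n k nu j =
    of_bool (int n dvd (e - 1 - j)) + of_bool (int n dvd (e + 1 - j)) - 2 * of_bool (int n dvd (e - j))"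
  using vvec_eq_card_rows[OF partition_mu, of n k j] vvec_eq_card_rows[OF partition_nu, of n k j]
    concave_rows_change[of n k j] convex_rows_change[of n k j]
    left_corners_change[of n k j] right_corners_change[of n k j]
  unfolding e_def by linarith

end

theorem mainTheorem11:
  fixes n :: nat and k i :: int and nu mu :: "nat \<Rightarrow> nat" and x y :: nat
  assumes "n \<ge> 3"
    and "k \<in> {0..<int n}" and "i \<in> {0..<int n}"
    and "is_partition nu" and "is_partition mu"
    and "(x, y) \<notin> boxes nu"
    and "boxes mu = insert (x, y) (boxes nu)"
    and "(k + int x - int y) mod int n = i"
  shows "\<forall>j \<in> {0..<int n}. vvec n k mu j - vvec n k nu j = - alpha_bar n i j"
proof
  fix j
  define e where "e = k + int x - int y"
  note row = added_box_row_update[OF assms(4-7)]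
  interpret box_addition nu x y
    using row assms(4,5) by unfold_locales simp_all
  have delta_i_eq: "delta_n n i = delta_n n e"
    using assms(3,8) by (simp add: fun_eq_iff delta_n_def e_def)
  have "- alpha_bar n i j = of_bool (int n dvd (e - 1 - j)) + of_bool (int n dvd (e + 1 - j))
      - 2 * of_bool (int n dvd (e - j))"
    unfolding alpha_bar_def delta_i_eq delta_n_eq_of_bool_dvd by (simp add: algebra_simps)
  then show "vvec n k mu j - vvec n k nu j = - alpha_bar n i j"
    using vvec_change[of n k j] unfolding row(4) e_def by simp
qed

end
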